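(* For all positive integers $k$, $n$ and $\delta$, $$\Phi_k(n)\le\left(\frac{\delta\,(1+\tau)\,k!}{\zeta(k,\delta)}\right)^{1/k} n^{1/k}+\frac{e-1}{e}\,k,$$ where $\tau=0$ if $k$ is even and $\tau=1$ if $k$ is odd.
   Context: A finite set $\mathcal A$ of non-negative integers is a $B_k$-sequence if all sums $a_1+\dots+a_k$ of $k$ elements of $\mathcal A$ (repetitions allowed) are different, i.e. distinct multisets $\{a_1,\dots,a_k\}$ of elements of $\mathcal A$ have distinct sums. $\Phi_k(n)$ is the maximum size of a $B_k$-sequence contained in $[0,n]$. For positive integers $m$ and $\delta$, a $\delta$-deviation set of size $m$ is a finite sequence $(\alpha_1,\dots,\alpha_\ell)$ of positive integers such that (i) $\sum_i\alpha_i=m$; (ii) $\big|\sum_i\alpha_{2i-1}-\sum_i\alpha_{2i}\big|\le 1$; (iii) $\big|\sum_{1\le i\le j}(-1)^{i-1}\alpha_i\big|\le\delta$ for every $j\ge1$; and $\zeta(m,\delta)$ is the number of $\delta$-deviation sets of size $m$. *)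

theory Defs
  imports Complex_Main "HOL-Library.Multiset"
begin

definition is_Bk :: "nat \<Rightarrow> nat set \<Rightarrow> bool" where
  "is_Bk k A \<longleftrightarrow> finite A \<and>
     (\<forall>M N. set_mset M \<subseteq> A \<and> set_mset N \<subseteq> A \<and> size M = k \<and> size N = k
        \<and> sum_mset M = sum_mset N \<longrightarrow> M = N)"

definition Phi :: "nat \<Rightarrow> nat \<Rightarrow> nat" where
  "Phi k n = Max {card A | A. A \<subseteq> {0..n} \<and> is_Bk k A}"

text \<open>Alternating partial sum: sum over i = 1..j of (-1)^(i-1) alpha_i
  (list is 0-indexed, so entry i of the list is alpha_(i+1)).\<close>
definition alt_psum :: "nat list \<Rightarrow> nat \<Rightarrow> int" where
  "alt_psum xs j = (\<Sum>i<j. (-1) ^ i * int (xs ! i))"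

definition is_dev_set :: "nat \<Rightarrow> nat \<Rightarrow> nat list \<Rightarrow> bool" where
  "is_dev_set m \<delta> xs \<longleftrightarrow>
     (\<forall>x\<in>set xs. 0 < x) \<and>
     sum_list xs = m \<and>
     \<bar>alt_psum xs (length xs)\<bar> \<le> 1 \<and>
     (\<forall>j\<in>{1..length xs}. \<bar>alt_psum xs j\<bar> \<le> int \<delta>)"

definition zeta :: "nat \<Rightarrow> nat \<Rightarrow> nat" where
  "zeta m \<delta> = card {xs. is_dev_set m \<delta> xs}"

end

theory Submission
  imports Defs
begin

(*
  Let A \<subseteq> [0,n] be a B_k-set with m elements. A \<delta>-deviation set (\<alpha>_1, \<alpha>_2, ...) of size k
  is encoded as the sign word \<epsilon> = (+1)^\<alpha>_1 (-1)^\<alpha>_2 (+1)^\<alpha>_3 ..., whose prefix sums stay in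
  [-\<delta>, \<delta>] and whose total is 0 for even k and +1 or -1 for odd k. For a k-subset
  b_0 < ... < b_(k-1) of A, the signed sum \<Sum> \<epsilon>_i b_i determines both the subset and the word:
  two equal signed sums with equal totals rearrange into two k-multisets of A with equal sums.
  Summation by parts expresses \<Sum> \<epsilon>_i b_i through the prefix sums of \<epsilon> and the gaps
  b_(j+1) - b_j, which confines it to 2\<delta>n + 1 values when the total is 0 (where \<epsilon> and -\<epsilon>
  are both counted) and to 2\<delta>n values when the total is normalised to 1. Hence
  C(m,k) \<zeta>(k,\<delta>) \<le> (1 + \<tau>) \<delta> n, and the bound follows from
  m (m-1) ... (m-k+1) \<ge> (m - (1 - 1/e) k)^k, obtained by comparing \<Sum> ln (m-i) with the
  integral of ln. When m < k the k-multisets of A, having distinct sums in [0, kn], are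
  counted instead.
*)

section \<open>Analytic estimates\<close>

(* By identric_gap_identity, b * identric_gap (a / b) is (b - a) times the gap between the
   logarithms of the identric mean of a and b and of the weighted mean (b + (e - 1) a) / e. *)
definition identric_gap :: "real \<Rightarrow> real" where
  "identric_gap t = - t * ln t - (1 - t) * ln (1 + (exp 1 - 1) * t)"

definition identric_gap' :: "real \<Rightarrow> real" where
  "identric_gap' t = ln (1 + (exp 1 - 1) * t) - ln t - exp 1 / (1 + (exp 1 - 1) * t)"

lemma has_real_derivative_identric_gap:
  assumes "0 < t"
  shows "(identric_gap has_real_derivative identric_gap' t) (at t)"
proof -
  define E where "E = exp 1 - (1::real)"
  have "0 < E" by (simp add: E_def)
  then have D: "0 < 1 + E * t" using assms by (simp add: add_pos_pos)
  have "(identric_gap has_real_derivative - (ln t + 1) + ln (1 + E * t) - (1 - t) * (E / (1 + E * t))) (at t)"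
    unfolding identric_gap_def[abs_def] E_def[symmetric] using assms D
    by (auto intro!: derivative_eq_intros simp: add_divide_distrib[symmetric] algebra_simps)
  moreover have "- (ln t + 1) + ln (1 + E * t) - (1 - t) * (E / (1 + E * t)) = identric_gap' t"
    unfolding identric_gap'_def E_def[symmetric] using D by (simp add: field_simps E_def)
  ultimately show ?thesis by simp
qed

lemma has_real_derivative_identric_gap':
  assumes "0 < t"
  shows "(identric_gap' has_real_derivative
           ((exp 1 - 1)\<^sup>2 * t - 1) / (t * (1 + (exp 1 - 1) * t)\<^sup>2)) (at t)"
proof -
  define E where "E = exp 1 - (1::real)"
  have e: "exp 1 = E + 1" and "0 < E" by (simp_all add: E_def)
  then have D: "0 < 1 + E * t" using assms by (simp add: add_pos_pos)
  have "(identric_gap' has_real_derivative E / (1 + E * t) - 1 / t - - ((E + 1) * E / (1 + E * t)\<^sup>2)) (at t)"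
    unfolding identric_gap'_def[abs_def] E_def[symmetric] e using assms D
    by (auto intro!: derivative_eq_intros simp: power2_eq_square)
  moreover have "E / (1 + E * t) - 1 / t - - ((E + 1) * E / (1 + E * t)\<^sup>2) =
      (E\<^sup>2 * t - 1) / (t * (1 + E * t)\<^sup>2)"
  proof -
    have "t \<noteq> 0" "1 + E * t \<noteq> 0" using D assms by auto
    then show ?thesis by (simp add: divide_simps) (simp add: power2_eq_square algebra_simps)
  qed
  ultimately show ?thesis by (simp add: E_def)
qed

lemma identric_gap'_sign:
  assumes "0 < x" "x \<le> y"
  shows "y \<le> 1 / (exp 1 - 1)\<^sup>2 \<Longrightarrow> identric_gap' y \<le> identric_gap' x"
    and "1 / (exp 1 - 1)\<^sup>2 \<le> x \<Longrightarrow> identric_gap' x \<le> identric_gap' y"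
proof -
  define d where "d z = ((exp 1 - 1)\<^sup>2 * z - 1) / (z * (1 + (exp 1 - 1) * z)\<^sup>2)" for z :: real
  have E: "0 < exp 1 - (1::real)" by simp
  have deriv: "(identric_gap' has_real_derivative d z) (at z)" if "x \<le> z" for z
    unfolding d_def using that assms by (intro has_real_derivative_identric_gap') simp
  have sign: "d z \<le> 0 \<longleftrightarrow> z \<le> 1 / (exp 1 - 1)\<^sup>2"
    "0 \<le> d z \<longleftrightarrow> 1 / (exp 1 - 1)\<^sup>2 \<le> z" if "x \<le> z" for z
  proof -
    have "0 < z * (1 + (exp 1 - 1) * z)\<^sup>2"
      using that assms E by (intro mult_pos_pos zero_less_power add_pos_pos) auto
    moreover have "(exp 1 - 1)\<^sup>2 * z \<le> 1 \<longleftrightarrow> z \<le> 1 / (exp 1 - 1)\<^sup>2"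
      "1 \<le> (exp 1 - 1)\<^sup>2 * z \<longleftrightarrow> 1 / (exp 1 - 1)\<^sup>2 \<le> z"
      using E by (simp_all add: pos_le_divide_eq pos_divide_le_eq mult.commute)
    ultimately show "d z \<le> 0 \<longleftrightarrow> z \<le> 1 / (exp 1 - 1)\<^sup>2"
      "0 \<le> d z \<longleftrightarrow> 1 / (exp 1 - 1)\<^sup>2 \<le> z"
      unfolding d_def by (simp_all add: divide_le_0_iff zero_le_divide_iff)
  qed
  show "identric_gap' y \<le> identric_gap' x" if "y \<le> 1 / (exp 1 - 1)\<^sup>2"
  proof (rule DERIV_nonpos_imp_nonincreasing[OF assms(2)])
    fix z assume "x \<le> z" "z \<le> y"
    then show "\<exists>d'. (identric_gap' has_real_derivative d') (at z) \<and> d' \<le> 0"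
      using deriv[of z] sign[of z] that by (intro exI[of _ "d z"]) simp
  qed
  show "identric_gap' x \<le> identric_gap' y" if "1 / (exp 1 - 1)\<^sup>2 \<le> x"
  proof (rule DERIV_nonneg_imp_nondecreasing[OF assms(2)])
    fix z assume "x \<le> z" "z \<le> y"
    then show "\<exists>d'. (identric_gap' has_real_derivative d') (at z) \<and> 0 \<le> d'"
      using deriv[of z] sign[of z] that by (intro exI[of _ "d z"]) auto
  qed
qed

lemma identric_gap_nonneg_near_0:
  assumes "0 < t" "t \<le> exp (1 - exp 1)"
  shows "0 \<le> identric_gap t"
proof -
  define E where "E = exp 1 - (1::real)"
  have "0 < E" by (simp add: E_def)
  have "ln t \<le> ln (exp (1 - exp 1))"
    using assms by (subst ln_le_cancel_iff) auto
  then have "ln t \<le> - E" by (simp add: E_def)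
  then have "t * E \<le> - t * ln t"
    using mult_left_mono[of "ln t" "- E" t] assms(1) by simp
  moreover have "(1 - t) * ln (1 + E * t) \<le> E * t"
  proof -
    have "exp (1 - exp 1) \<le> (1::real)" by simp
    then have "t \<le> 1" using assms(2) by linarith
    then have "(1 - t) * ln (1 + E * t) \<le> ln (1 + E * t)"
      using assms(1) \<open>0 < E\<close> by (intro mult_left_le_one_le) auto
    also have "\<dots> \<le> E * t"
      using assms(1) \<open>0 < E\<close> by (intro ln_add_one_self_le_self) simp
    finally show ?thesis .
  qed
  ultimately show ?thesis
    unfolding identric_gap_def E_def[symmetric] by (simp add: algebra_simps)
qed

(* The function vanishes at 0 and 1, and its derivative is positive near 0, decreases up to
   1 / (e - 1)^2, then increases to 0 at t = 1; so it first rises and then falls. *)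
lemma identric_gap_nonneg:
  assumes "0 \<le> t" "t \<le> 1"
  shows "0 \<le> identric_gap t"
proof (cases "t = 0")
  case True
  then show ?thesis by (simp add: identric_gap_def)
next
  case False
  with assms have "0 < t" by simp
  consider "\<forall>z. t \<le> z \<and> z \<le> 1 \<longrightarrow> identric_gap' z \<le> 0"
    | z where "t \<le> z" "z \<le> 1" "0 < identric_gap' z"
    by force
  then show ?thesis
  proof cases
    case 1
    have "identric_gap 1 \<le> identric_gap t"
      using 1 \<open>0 < t\<close> has_real_derivative_identric_gap
      by (intro DERIV_nonpos_imp_nonincreasing[OF assms(2)]) force
    then show ?thesis by (simp add: identric_gap_def)
  next
    case 2
    have "identric_gap' 1 = 0" by (simp add: identric_gap'_def)
    then have "z < 1 / (exp 1 - 1)\<^sup>2"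
      using identric_gap'_sign(2)[of z 1] 2 \<open>0 < t\<close> by force
    then have incr: "0 \<le> identric_gap' u" if "0 < u" "u \<le> t" for u
      using identric_gap'_sign(1)[of u z] 2 that by simp
    define x where "x = min t (exp (1 - exp 1))"
    have "0 < x" "x \<le> t" by (simp_all add: x_def \<open>0 < t\<close>)
    have "identric_gap x \<le> identric_gap t"
      using incr \<open>0 < x\<close> has_real_derivative_identric_gap
      by (intro DERIV_nonneg_imp_nondecreasing[OF \<open>x \<le> t\<close>]) force
    moreover have "0 \<le> identric_gap x"
      using \<open>0 < x\<close> by (intro identric_gap_nonneg_near_0) (simp_all add: x_def)
    ultimately show ?thesis by simp
  qed
qed

lemma identric_gap_identity:
  assumes "0 \<le> a" "a \<le> b" "0 < b"
  shows "b * ln b - a * ln a - (b - a) - (b - a) * ln (b - (exp 1 - 1) / exp 1 * (b - a))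
           = b * identric_gap (a / b)"
proof -
  define E where "E = exp 1 - (1::real)"
  have "0 < E" by (simp add: E_def)
  have pos: "0 < b + E * a" using assms \<open>0 < E\<close> by (simp add: add_pos_nonneg)
  have "b - (exp 1 - 1) / exp 1 * (b - a) = (b + E * a) / exp 1"
    by (simp add: E_def field_simps)
  then have l1: "ln (b - (exp 1 - 1) / exp 1 * (b - a)) = ln (b + E * a) - 1"
    using pos by (simp add: ln_div)
  have "1 + E * (a / b) = (b + E * a) / b" using assms by (simp add: field_simps)
  then have l2: "ln (1 + E * (a / b)) = ln (b + E * a) - ln b"
    using pos assms by (simp add: ln_div)
  have l3: "a * ln (a / b) = a * ln a - a * ln b"
    using assms by (cases "a = 0") (simp_all add: ln_div algebra_simps)
  have "b * identric_gap (a / b) = - (a * ln (a / b)) - (b - a) * ln (1 + E * (a / b))"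
    unfolding identric_gap_def E_def[symmetric] using assms by (simp add: field_simps)
  then show ?thesis
    unfolding l1 l2 l3 by (simp add: algebra_simps)
qed

lemma x_ln_x_increment_le:
  assumes "1 \<le> x"
  shows "x * ln x - (x - 1) * ln (x - 1) - 1 \<le> ln (x::real)"
proof (cases "x = 1")
  case False
  with assms have "1 < x" by simp
  have "ln (x / (x - 1)) \<le> x / (x - 1) - 1"
    using \<open>1 < x\<close> by (intro ln_le_minus_one) auto
  also have "\<dots> = 1 / (x - 1)" using \<open>1 < x\<close> by (simp add: field_simps)
  finally have "(x - 1) * (ln x - ln (x - 1)) \<le> 1"
    using \<open>1 < x\<close> by (simp add: ln_div field_simps)
  then show ?thesis by (simp add: algebra_simps)
qed simp

lemma pow_le_falling_prod:
  assumes "1 \<le> k" "k \<le> m"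
  shows "(real m - (exp 1 - 1) / exp 1 * real k) ^ k \<le> (\<Prod>i<k. real m - real i)"
proof -
  define c where "c = (exp 1 - 1) / exp (1::real)"
  define F where "F x = x * ln x - x" for x :: real
  have "c < 1" by (simp add: c_def)
  with assms have "c * real k < real k" by simp
  with assms have "c * real k < real m" by linarith
  then have pos: "0 < real m - c * real k" by simp
  have "F (real m) - F (real m - real k) = (\<Sum>i<k. F (real m - real i) - F (real m - real (Suc i)))"
    using sum_lessThan_telescope'[of "\<lambda>i. F (real m - real i)" k] by simp
  also have "\<dots> \<le> (\<Sum>i<k. ln (real m - real i))"
  proof (intro sum_mono)
    fix i assume "i \<in> {..<k}"
    then have "1 \<le> real m - real i" using assms by auto
    from x_ln_x_increment_le[OF this]
    show "F (real m - real i) - F (real m - real (Suc i)) \<le> ln (real m - real i)"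
      by (simp add: F_def algebra_simps)
  qed
  also have "\<dots> = ln (\<Prod>i<k. real m - real i)"
    using assms by (subst ln_prod) auto
  finally have upper: "F (real m) - F (real m - real k) \<le> ln (\<Prod>i<k. real m - real i)" .
  have "F (real m) - F (real m - real k) - real k * ln (real m - c * real k)
          = real m * identric_gap ((real m - real k) / real m)"
    using identric_gap_identity[of "real m - real k" "real m"] assms
    by (simp add: F_def c_def algebra_simps)
  also have "\<dots> \<ge> 0"
    using assms by (intro mult_nonneg_nonneg identric_gap_nonneg) (auto simp: field_simps)
  finally have "ln ((real m - c * real k) ^ k) \<le> ln (\<Prod>i<k. real m - real i)"
    using upper pos by (simp add: ln_realpow)
  moreover have "0 < (\<Prod>i<k. real m - real i)" using assms by (intro prod_pos) auto
  ultimately show ?thesis using pos by (simp add: c_def)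
qed

lemma choose_mult_fact_eq_prod: "real (m choose k) * fact k = (\<Prod>i<k. real m - real i)"
proof -
  have "real (m choose k) = (\<Prod>i=0..<k. real m - of_nat i) / fact k"
    using binomial_gbinomial[of m k, where 'a=real] by (simp add: gbinomial_prod_rev)
  then show ?thesis by (simp add: atLeast0LessThan)
qed

lemma exp_one_ge: "8 / 3 \<le> exp (1::real)"
proof -
  have "(25 / 18) ^ 3 \<le> exp (1 / 3 :: real) ^ 3"
    using exp_lower_Taylor_quadratic[of "1 / 3 :: real"]
    by (intro power_mono) (simp_all add: power2_eq_square)
  also have "\<dots> = exp 1" by (simp flip: exp_of_nat_mult)
  finally show ?thesis by (simp add: power_divide)
qed

lemma two_div_exp_one_pow_le:
  assumes "0 < k"
  shows "(2 / exp 1) ^ k * (real k + 1) \<le> 2"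
proof -
  define r where "r = 2 / exp (1::real)"
  have "0 < r" "r \<le> 3 / 4"
    using exp_one_ge by (simp_all add: r_def field_simps)
  have "r ^ k * (real k + 1) \<le> 2" if "2 \<le> k"
    using that
  proof (induction k rule: dec_induct)
    case base
    have "r ^ 2 \<le> (3 / 4) ^ 2"
      using \<open>0 < r\<close> \<open>r \<le> 3 / 4\<close> by (intro power_mono) simp_all
    then show ?case by (simp add: power_divide)
  next
    case (step k)
    have "r * (real k + 2) \<le> 3 / 4 * (real k + 2)"
      using \<open>r \<le> 3 / 4\<close> by (intro mult_right_mono) simp_all
    also have "\<dots> \<le> real k + 1"
      using step(1) by simp
    finally have "r ^ k * (r * (real k + 2)) \<le> r ^ k * (real k + 1)"
      using \<open>0 < r\<close> by (intro mult_left_mono) simp_all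
    with step(3) show ?case
      by (simp add: algebra_simps)
  qed
  moreover have "r * 2 \<le> 2"
    using \<open>r \<le> 3 / 4\<close> by simp
  ultimately show ?thesis
    using assms by (cases "k = 1") (simp_all add: r_def)
qed

lemma le_powr_inverse_if_pow_le:
  assumes "0 \<le> x" "0 < k" "x ^ k \<le> y"
  shows "x \<le> y powr (1 / real k)"
proof -
  have "x = root k (x ^ k)" using assms(1,2) by (simp add: real_root_power_cancel)
  also have "\<dots> \<le> root k y" using assms(2,3) by (rule real_root_le_mono)
  also have "\<dots> = y powr (1 / real k)"
    using assms by (intro root_powr_inverse) (auto intro: order_trans[OF zero_le_power])
  finally show ?thesis .
qed

section \<open>Deviation sets as bounded walks\<close>

fun signs :: "nat list \<Rightarrow> int list" where
  "signs [] = []"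
| "signs (a # xs) = replicate a 1 @ map uminus (signs xs)"

lemma length_signs: "length (signs xs) = sum_list xs"
  by (induction xs) auto

lemma set_signs: "set (signs xs) \<subseteq> {-1, 1}"
  by (induction xs) auto

lemma alt_psum_0 [simp]: "alt_psum xs 0 = 0"
  by (simp add: alt_psum_def)

lemma alt_psum_Cons_Suc: "alt_psum (a # xs) (Suc j) = int a - alt_psum xs j"
  unfolding alt_psum_def by (subst sum.lessThan_Suc_shift) (simp add: sum_negf)

lemma sum_list_map_uminus: "sum_list (map uminus xs) = - sum_list (xs :: 'a::ab_group_add list)"
  by (induction xs) simp_all

lemma sum_list_signs: "sum_list (signs xs) = alt_psum xs (length xs)"
  by (induction xs) (simp_all add: alt_psum_Cons_Suc sum_list_replicate sum_list_map_uminus)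

lemma signs_Cons_pos: "0 < a \<Longrightarrow> signs (a # xs) = 1 # signs ((a - 1) # xs)"
  by (cases a) simp_all

lemma takeWhile_signs:
  assumes "\<forall>x\<in>set xs. 0 < x"
  shows "takeWhile (\<lambda>x. x = 1) (signs (a # xs)) = replicate a 1"
proof -
  have "takeWhile (\<lambda>x. x = 1) (map uminus (signs xs)) = []"
  proof (cases xs)
    case (Cons b ys)
    with assms show ?thesis by (simp add: signs_Cons_pos del: signs.simps)
  qed simp
  then show ?thesis unfolding signs.simps by (subst takeWhile_append2) auto
qed

lemma signs_inj:
  assumes "\<forall>x\<in>set xs. 0 < x" "\<forall>y\<in>set ys. 0 < y" "signs xs = signs ys"
  shows "xs = ys"
  using assms
proof (induction xs arbitrary: ys)
  case Nil
  then show ?case by (cases ys) (auto simp: signs_Cons_pos simp del: signs.simps(2))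
next
  case (Cons a xs)
  obtain b ys' where ys: "ys = b # ys'"
    using Cons.prems by (cases ys) (auto simp: signs_Cons_pos simp del: signs.simps(2))
  have "replicate a (1::int) = takeWhile (\<lambda>x. x = 1) (signs (a # xs))"
    by (rule takeWhile_signs[symmetric]) (use Cons.prems(1) in simp)
  also have "\<dots> = takeWhile (\<lambda>x. x = 1) (signs (b # ys'))"
    unfolding Cons.prems(3) ys ..
  also have "\<dots> = replicate b 1"
    by (rule takeWhile_signs) (use Cons.prems(2) ys in simp)
  finally have "a = b" by (metis length_replicate)
  with Cons.prems(3) have "map uminus (signs xs) = map uminus (signs ys')"
    by (simp add: ys)
  then have "signs xs = signs ys'"
    by (simp add: inj_map_eq_map)
  then have "xs = ys'" using Cons.IH Cons.prems(1,2) ys by simp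
  then show ?case using \<open>a = b\<close> ys by simp
qed

lemma sum_take_signs_bounds:
  assumes "lo \<le> 0" "0 \<le> hi" "\<forall>j\<in>{1..length xs}. lo \<le> alt_psum xs j \<and> alt_psum xs j \<le> hi"
  shows "lo \<le> sum_list (take p (signs xs)) \<and> sum_list (take p (signs xs)) \<le> hi"
  using assms
proof (induction xs arbitrary: p lo hi)
  case Nil
  then show ?case by simp
next
  case (Cons a xs)
  have "lo \<le> alt_psum (a # xs) 1 \<and> alt_psum (a # xs) 1 \<le> hi"
    using Cons.prems(3) by simp
  then have a: "lo \<le> int a" "int a \<le> hi"
    using alt_psum_Cons_Suc[of a xs 0] by simp_all
  have "\<forall>j\<in>{1..length xs}. int a - hi \<le> alt_psum xs j \<and> alt_psum xs j \<le> int a - lo"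
  proof
    fix j assume "j \<in> {1..length xs}"
    then have "lo \<le> alt_psum (a # xs) (Suc j) \<and> alt_psum (a # xs) (Suc j) \<le> hi"
      using Cons.prems(3) by simp
    then show "int a - hi \<le> alt_psum xs j \<and> alt_psum xs j \<le> int a - lo"
      by (simp add: alt_psum_Cons_Suc)
  qed
  from Cons.IH[OF _ _ this, of "p - a"] a
  have "int a - hi \<le> sum_list (take (p - a) (signs xs)) \<and> sum_list (take (p - a) (signs xs)) \<le> int a - lo"
    by simp
  with a Cons.prems(1,2) show ?case
    by (cases "p \<le> a") (simp_all add: take_map sum_list_replicate sum_list_map_uminus)
qed

definition walks :: "nat \<Rightarrow> nat \<Rightarrow> int \<Rightarrow> int list set" where
  "walks k \<delta> s = {e. length e = k \<and> set e \<subseteq> {-1, 1} \<and> sum_list e = s \<and>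
                      (\<forall>p. \<bar>sum_list (take p e)\<bar> \<le> int \<delta>)}"

lemma finite_walks: "finite (walks k \<delta> s)"
  by (rule finite_subset[OF _ finite_lists_length_eq[of "{-1, 1 :: int}" k]])
    (auto simp: walks_def)

lemma map_uminus_mem_walks: "e \<in> walks k \<delta> s \<Longrightarrow> map uminus e \<in> walks k \<delta> (- s)"
  by (auto simp: walks_def take_map sum_list_map_uminus)

lemma even_sum_list_plus_length: "set e \<subseteq> {-1, 1} \<Longrightarrow> even (sum_list e + int (length e))"
  by (induction e) auto

lemma signs_mem_walks:
  assumes "is_dev_set k \<delta> xs"
  shows "signs xs \<in> walks k \<delta> (alt_psum xs (length xs))"
proof -
  have "\<forall>j\<in>{1..length xs}. - int \<delta> \<le> alt_psum xs j \<and> alt_psum xs j \<le> int \<delta>"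
    using assms by (auto simp: is_dev_set_def abs_le_iff)
  then have "\<bar>sum_list (take p (signs xs))\<bar> \<le> int \<delta>" for p
    using sum_take_signs_bounds[of "- int \<delta>" "int \<delta>" xs p] by (simp add: abs_le_iff)
  then show ?thesis
    using assms by (simp add: walks_def is_dev_set_def length_signs set_signs sum_list_signs)
qed

lemma alt_psum_dev_set:
  assumes "is_dev_set k \<delta> xs"
  shows "even k \<Longrightarrow> alt_psum xs (length xs) = 0"
    and "odd k \<Longrightarrow> alt_psum xs (length xs) = 1 \<or> alt_psum xs (length xs) = -1"
proof -
  have "even (alt_psum xs (length xs) + int k)"
    using even_sum_list_plus_length[OF set_signs[of xs]] signs_mem_walks[OF assms]
    by (simp add: walks_def)
  moreover have "\<bar>alt_psum xs (length xs)\<bar> \<le> 1"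
    using assms by (simp add: is_dev_set_def)
  ultimately show "even k \<Longrightarrow> alt_psum xs (length xs) = 0"
    and "odd k \<Longrightarrow> alt_psum xs (length xs) = 1 \<or> alt_psum xs (length xs) = -1"
    by (simp_all add: abs_le_iff) presburger+
qed

lemma hd_signs_dev_set:
  assumes "is_dev_set k \<delta> xs" "0 < k"
  shows "hd (signs xs) = 1"
  using assms by (cases xs) (auto simp: is_dev_set_def signs_Cons_pos simp del: signs.simps(2))

lemma inj_on_signs_dev_sets: "inj_on signs {xs. is_dev_set k \<delta> xs}"
  by (rule inj_onI) (auto simp: is_dev_set_def intro: signs_inj)

lemma finite_dev_sets: "finite {xs. is_dev_set k \<delta> xs}"
proof (rule inj_on_finite[OF inj_on_signs_dev_sets])
  show "signs ` {xs. is_dev_set k \<delta> xs} \<subseteq> {e. set e \<subseteq> {-1, 1} \<and> length e = k}"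
    using signs_mem_walks by (force simp: walks_def)
qed (rule finite_lists_length_eq, simp)

lemma signs_ne_Nil: "is_dev_set k \<delta> xs \<Longrightarrow> 0 < k \<Longrightarrow> signs xs \<noteq> []"
  using signs_mem_walks[of k \<delta> xs] by (auto simp: walks_def)

lemma signs_ne_map_uminus_signs:
  assumes "is_dev_set k \<delta> xs" "is_dev_set k \<delta> ys" "0 < k"
  shows "signs xs \<noteq> map uminus (signs ys)"
proof
  assume "signs xs = map uminus (signs ys)"
  then have "hd (signs xs) = - hd (signs ys)"
    using signs_ne_Nil[OF assms(2,3)] by (simp add: hd_map)
  then show False
    using hd_signs_dev_set[OF assms(1,3)] hd_signs_dev_set[OF assms(2,3)] by simp
qed

lemma two_mult_zeta_le_card_walks:
  assumes "0 < k" "even k"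
  shows "2 * zeta k \<delta> \<le> card (walks k \<delta> 0)"
proof -
  let ?D = "{xs. is_dev_set k \<delta> xs}"
  have inj: "inj_on signs ?D" "inj_on (map uminus \<circ> signs) ?D"
    using inj_on_signs_dev_sets by (auto intro: comp_inj_on simp: inj_on_def)
  have "signs ` ?D \<union> (map uminus \<circ> signs) ` ?D \<subseteq> walks k \<delta> 0"
    using signs_mem_walks alt_psum_dev_set(1) map_uminus_mem_walks assms(2) by fastforce
  moreover have "signs ` ?D \<inter> (map uminus \<circ> signs) ` ?D = {}"
    using signs_ne_map_uminus_signs assms(1) by fastforce
  ultimately have "card (signs ` ?D) + card ((map uminus \<circ> signs) ` ?D) \<le> card (walks k \<delta> 0)"
    by (metis card_Un_disjoint card_mono finite_Un finite_subset finite_walks)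
  moreover have "card (signs ` ?D) = zeta k \<delta>" "card ((map uminus \<circ> signs) ` ?D) = zeta k \<delta>"
    using card_image[OF inj(1)] card_image[OF inj(2)] by (simp_all add: zeta_def)
  ultimately show ?thesis by simp
qed

lemma zeta_le_card_walks:
  assumes "odd k"
  shows "zeta k \<delta> \<le> card (walks k \<delta> 1)"
proof -
  let ?D = "{xs. is_dev_set k \<delta> xs}"
  define f where "f xs = (if alt_psum xs (length xs) = 1 then signs xs else map uminus (signs xs))"
    for xs
  have "0 < k" using assms by presburger
  have "f ` ?D \<subseteq> walks k \<delta> 1"
    using signs_mem_walks alt_psum_dev_set(2)[OF _ assms] map_uminus_mem_walks
    by (fastforce simp: f_def)
  moreover have "inj_on f ?D"
  proof (rule inj_onI)
    fix xs ys assume "xs \<in> ?D" "ys \<in> ?D" "f xs = f ys"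
    then have "signs xs = signs ys"
      using signs_ne_map_uminus_signs[OF _ _ \<open>0 < k\<close>, of \<delta>]
      by (auto simp: f_def split: if_splits) metis
    with \<open>xs \<in> ?D\<close> \<open>ys \<in> ?D\<close> show "xs = ys"
      using inj_on_signs_dev_sets by (auto dest: inj_onD)
  qed
  ultimately show ?thesis
    unfolding zeta_def by (metis card_image card_mono finite_walks)
qed

lemma alt_psum_replicate_one:
  "j \<le> k \<Longrightarrow> alt_psum (replicate k 1) j = (if even j then 0 else 1)"
  by (induction j) (auto simp: alt_psum_def)

lemma zeta_pos:
  assumes "0 < k" "0 < \<delta>"
  shows "0 < zeta k \<delta>"
proof -
  have "is_dev_set k \<delta> (replicate k 1)"
    using assms alt_psum_replicate_one by (auto simp: is_dev_set_def sum_list_replicate)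
  then show ?thesis
    using finite_dev_sets by (auto simp: zeta_def card_gt_0_iff)
qed

lemma zeta_le_two_pow:
  assumes "0 < k"
  shows "zeta k \<delta> \<le> 2 ^ (k - 1)"
proof -
  let ?W = "{e. set e \<subseteq> {-1 :: int, 1} \<and> length e = k - 1}"
  have "signs ` {xs. is_dev_set k \<delta> xs} \<subseteq> (Cons 1) ` ?W"
  proof
    fix e assume "e \<in> signs ` {xs. is_dev_set k \<delta> xs}"
    then obtain xs where xs: "is_dev_set k \<delta> xs" "e = signs xs" by blast
    then have "e \<noteq> []" "hd e = 1" "set e \<subseteq> {-1, 1}" "length e = k"
      using signs_ne_Nil hd_signs_dev_set signs_mem_walks assms by (auto simp: walks_def)
    then show "e \<in> (Cons 1) ` ?W"
      by (cases e) auto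
  qed
  then have "zeta k \<delta> \<le> card ((Cons 1) ` ?W)"
    unfolding zeta_def
    by (intro card_inj_on_le[OF inj_on_signs_dev_sets]) (simp_all add: finite_lists_length_eq)
  also have "\<dots> = card ?W"
    by (simp add: card_image)
  also have "\<dots> = 2 ^ (k - 1)"
    by (simp add: card_lists_length_eq numeral_2_eq_2)
  finally show ?thesis .
qed

section \<open>Signed sums over \<open>B\<^sub>k\<close>-sets\<close>

lemma Bk_parts_eq:
  assumes "is_Bk k A" "P \<union> N \<subseteq> A" "P' \<union> N' \<subseteq> A" "P \<inter> N = {}" "P' \<inter> N' = {}"
    and "card P + card N' = k" "card P' + card N = k" "\<Sum>P + \<Sum>N' = \<Sum>P' + \<Sum>N"
  shows "P = P' \<and> N = N'"
proof -
  have "finite A" using assms(1) by (simp add: is_Bk_def)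
  then have fin: "finite P" "finite N" "finite P'" "finite N'"
    using assms(2,3) by (auto intro: finite_subset)
  let ?M = "mset_set P + mset_set N'" and ?M' = "mset_set P' + mset_set N"
  have "?M = ?M'"
    using assms(1) unfolding is_Bk_def
  proof (elim conjE allE impE)
    show "set_mset ?M \<subseteq> A \<and> set_mset ?M' \<subseteq> A \<and> size ?M = k \<and> size ?M' = k \<and>
          sum_mset ?M = sum_mset ?M'"
      using assms(2-8) fin by (simp add: sum_unfold_sum_mset)
  qed
  then have "set_mset ?M = set_mset ?M'" by simp
  then have "P \<union> N' = P' \<union> N" using fin by simp
  with assms(4,5) show ?thesis by blast
qed

lemma sum_split_pm:
  fixes e :: "int list" and f :: "nat \<Rightarrow> int"
  assumes "set e \<subseteq> {-1, 1}"
  shows "(\<Sum>i<length e. e ! i * f i) =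
           (\<Sum>i | i < length e \<and> e ! i = 1. f i) - (\<Sum>i | i < length e \<and> e ! i = -1. f i)"
proof -
  let ?P = "{i. i < length e \<and> e ! i = 1}" and ?N = "{i. i < length e \<and> e ! i = -1}"
  have "{..<length e} = ?P \<union> ?N" using assms nth_mem by fastforce
  then have "(\<Sum>i<length e. e ! i * f i) = (\<Sum>i\<in>?P. e ! i * f i) + (\<Sum>i\<in>?N. e ! i * f i)"
    by (simp add: sum.union_disjoint disjoint_iff)
  also have "\<dots> = (\<Sum>i\<in>?P. f i) - (\<Sum>i\<in>?N. f i)"
    by (simp add: sum_negf[symmetric])
  finally show ?thesis .
qed

definition signed_sum :: "nat set \<Rightarrow> int list \<Rightarrow> int" where
  "signed_sum B e = (\<Sum>i<length e. e ! i * int (sorted_list_of_set B ! i))"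

definition sign_part :: "nat set \<Rightarrow> int list \<Rightarrow> int \<Rightarrow> nat set" where
  "sign_part B e \<sigma> = (\<lambda>i. sorted_list_of_set B ! i) ` {i. i < length e \<and> e ! i = \<sigma>}"

context
  fixes B :: "nat set" and e :: "int list"
  assumes fin: "finite B" and len: "length e = card B" and pm: "set e \<subseteq> {-1, 1}"
begin

private lemma inj_on_nth_sorted: "inj_on (\<lambda>i. sorted_list_of_set B ! i) {i. i < length e \<and> P i}"
  using fin len by (intro inj_on_nth) auto

lemma sign_parts_disjoint: "sign_part B e 1 \<inter> sign_part B e (-1) = {}"
  using fin len by (auto simp: sign_part_def nth_eq_iff_index_eq)

lemma sign_parts_union: "sign_part B e 1 \<union> sign_part B e (-1) = B"
proof -
  have "{i. i < length e \<and> e ! i = 1} \<union> {i. i < length e \<and> e ! i = -1} = {0..<length e}"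
    using pm nth_mem by fastforce
  then have "sign_part B e 1 \<union> sign_part B e (-1) = (!) (sorted_list_of_set B) ` {0..<length e}"
    unfolding sign_part_def image_Un[symmetric] by simp
  also have "\<dots> = B"
    using fin len by (simp add: nth_image)
  finally show ?thesis .
qed

lemma card_sign_part: "card (sign_part B e \<sigma>) = card {i. i < length e \<and> e ! i = \<sigma>}"
  unfolding sign_part_def using inj_on_nth_sorted by (rule card_image)

lemma card_sign_parts: "card (sign_part B e 1) + card (sign_part B e (-1)) = card B"
  using sign_parts_union sign_parts_disjoint fin
  by (metis card_Un_disjoint finite_Un)

lemma sum_list_sign_parts:
  "sum_list e = int (card (sign_part B e 1)) - int (card (sign_part B e (-1)))"
  using sum_split_pm[OF pm, of "\<lambda>_. 1"]
  by (simp add: card_sign_part sum_list_sum_nth atLeast0LessThan)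

lemma signed_sum_sign_parts:
  "signed_sum B e = int (\<Sum>(sign_part B e 1)) - int (\<Sum>(sign_part B e (-1)))"
  unfolding signed_sum_def sum_split_pm[OF pm] sign_part_def
  by (simp add: sum.reindex[OF inj_on_nth_sorted])

lemma map_sign_part:
  "map (\<lambda>x. if x \<in> sign_part B e 1 then 1 else -1) (sorted_list_of_set B) = e"
proof (rule nth_equalityI)
  fix i assume "i < length (map (\<lambda>x. if x \<in> sign_part B e 1 then 1 else -1) (sorted_list_of_set B))"
  then have i: "i < length e" using fin len by simp
  then have "sorted_list_of_set B ! i \<in> sign_part B e 1 \<longleftrightarrow> e ! i = 1"
    using fin len by (auto simp: sign_part_def nth_eq_iff_index_eq)
  moreover have "e ! i \<in> {-1, 1}" using i pm nth_mem by blast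
  ultimately show "map (\<lambda>x. if x \<in> sign_part B e 1 then 1 else -1) (sorted_list_of_set B) ! i = e ! i"
    using i fin len by auto
qed (use fin len in simp)

end

lemma signed_sum_eq_imp_eq:
  assumes "is_Bk k A" "B \<subseteq> A" "B' \<subseteq> A" "card B = k" "card B' = k"
    and "length e = k" "length e' = k" "set e \<subseteq> {-1, 1}" "set e' \<subseteq> {-1, 1}"
    and "sum_list e = sum_list e'" "signed_sum B e = signed_sum B' e'"
  shows "B = B' \<and> e = e'"
proof -
  have "finite A" using assms(1) by (simp add: is_Bk_def)
  then have fin: "finite B" "finite B'" using assms(2,3) by (auto intro: finite_subset)
  have len: "length e = card B" "length e' = card B'" using assms(4-7) by simp_all
  define P N P' N' where "P = sign_part B e 1" and "N = sign_part B e (-1)"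
    and "P' = sign_part B' e' 1" and "N' = sign_part B' e' (-1)"
  have un: "P \<union> N = B" "P' \<union> N' = B'"
    using sign_parts_union[OF fin(1) len(1) assms(8)] sign_parts_union[OF fin(2) len(2) assms(9)]
    by (simp_all add: P_def N_def P'_def N'_def)
  have card: "card P + card N = k" "card P' + card N' = k"
    using card_sign_parts[OF fin(1) len(1) assms(8)] card_sign_parts[OF fin(2) len(2) assms(9)] assms(4,5)
    by (simp_all add: P_def N_def P'_def N'_def)
  have "int (card P) - int (card N) = int (card P') - int (card N')"
    using sum_list_sign_parts[OF fin(1) len(1) assms(8)] sum_list_sign_parts[OF fin(2) len(2) assms(9)] assms(10)
    by (simp add: P_def N_def P'_def N'_def)
  with card have card': "card P + card N' = k" "card P' + card N = k" by linarith+
  have "int (\<Sum>P) - int (\<Sum>N) = int (\<Sum>P') - int (\<Sum>N')"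
    using signed_sum_sign_parts[OF fin(1) len(1) assms(8)] signed_sum_sign_parts[OF fin(2) len(2) assms(9)] assms(11)
    by (simp add: P_def N_def P'_def N'_def)
  then have sums: "\<Sum>P + \<Sum>N' = \<Sum>P' + \<Sum>N" by linarith
  have "P = P' \<and> N = N'"
  proof (rule Bk_parts_eq[OF assms(1) _ _ _ _ card' sums])
    show "P \<union> N \<subseteq> A" "P' \<union> N' \<subseteq> A" using un assms(2,3) by simp_all
    show "P \<inter> N = {}" "P' \<inter> N' = {}"
      using sign_parts_disjoint[OF fin(1) len(1) assms(8)] sign_parts_disjoint[OF fin(2) len(2) assms(9)]
      by (simp_all add: P_def N_def P'_def N'_def)
  qed
  with un have "B = B'" by simp
  moreover have "e = map (\<lambda>x. if x \<in> P then 1 else -1) (sorted_list_of_set B)"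
    "e' = map (\<lambda>x. if x \<in> P' then 1 else -1) (sorted_list_of_set B')"
    using map_sign_part[OF fin(1) len(1) assms(8)] map_sign_part[OF fin(2) len(2) assms(9)]
    by (simp_all only: P_def P'_def)
  with \<open>P = P' \<and> N = N'\<close> \<open>B = B'\<close> have "e = e'" by simp
  ultimately show ?thesis ..
qed

lemma inj_on_signed_sum:
  assumes "is_Bk k A"
  shows "inj_on (\<lambda>(B, e). signed_sum B e)
           ({B. B \<subseteq> A \<and> card B = k} \<times> {e. length e = k \<and> set e \<subseteq> {-1, 1} \<and> sum_list e = s})"
  by (rule inj_onI) (auto dest: signed_sum_eq_imp_eq[OF assms])

section \<open>Summation by parts\<close>

lemma summation_by_parts:
  fixes e b :: "nat \<Rightarrow> 'a::comm_ring_1"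
  shows "(\<Sum>i<Suc n. e i * b i) =
           (\<Sum>i<Suc n. e i) * b n - (\<Sum>j<n. (\<Sum>i<Suc j. e i) * (b (Suc j) - b j))"
  by (induction n) (simp_all add: algebra_simps)

lemma sum_mult_by_parts_bound:
  fixes e b :: "nat \<Rightarrow> int"
  assumes prefix: "\<And>j. j \<le> Suc n \<Longrightarrow> \<bar>\<Sum>i<j. e i\<bar> \<le> d"
    and mono: "\<And>j. j < n \<Longrightarrow> b j \<le> b (Suc j)"
  shows "\<bar>(\<Sum>i<Suc n. e i * b i) - (\<Sum>i<Suc n. e i) * b n\<bar> \<le> d * (b n - b 0)"
proof -
  have "\<bar>(\<Sum>i<Suc n. e i * b i) - (\<Sum>i<Suc n. e i) * b n\<bar>
          = \<bar>\<Sum>j<n. (\<Sum>i<Suc j. e i) * (b (Suc j) - b j)\<bar>"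
    unfolding summation_by_parts by simp
  also have "\<dots> \<le> (\<Sum>j<n. \<bar>\<Sum>i<Suc j. e i\<bar> * (b (Suc j) - b j))"
    using mono by (intro order_trans[OF sum_abs] sum_mono) (simp add: abs_mult)
  also have "\<dots> \<le> (\<Sum>j<n. d * (b (Suc j) - b j))"
  proof (intro sum_mono mult_right_mono)
    fix j assume "j \<in> {..<n}"
    then show "\<bar>\<Sum>i<Suc j. e i\<bar> \<le> d" "0 \<le> b (Suc j) - b j"
      using prefix[of "Suc j"] mono[of j] by simp_all
  qed
  also have "\<dots> = d * (b n - b 0)"
    by (simp add: sum_distrib_left[symmetric] sum_lessThan_telescope)
  finally show ?thesis .
qed

lemma sum_mult_by_parts_upper:
  fixes e b :: "nat \<Rightarrow> int"
  assumes prefix: "\<And>j. j \<le> Suc n \<Longrightarrow> \<bar>\<Sum>i<j. e i\<bar> \<le> d"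
    and strict: "\<And>j. j < n \<Longrightarrow> b j < b (Suc j)"
    and "2 \<le> n" "e 1 \<noteq> 0"
  shows "(\<Sum>i<Suc n. e i * b i) \<le> (\<Sum>i<Suc n. e i) * b n + d * (b n - b 0) - 1"
proof -
  define S where "S j = (\<Sum>i<Suc j. e i)" for j
  have nonneg: "0 \<le> (S j + d) * (b (Suc j) - b j)" if "j < n" for j
    using prefix[of "Suc j"] strict[OF that] that by (intro mult_nonneg_nonneg) (auto simp: S_def)
  \<comment> \<open>two consecutive partial sums differ, so one of them stays off the bottom \<open>-d\<close>\<close>
  have "S 0 \<noteq> S 1" using \<open>e 1 \<noteq> 0\<close> by (simp add: S_def)
  moreover have "- d \<le> S 0" "- d \<le> S 1"
    using prefix[of 1] prefix[of 2] \<open>2 \<le> n\<close> by (simp_all add: S_def abs_le_iff numeral_2_eq_2)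
  ultimately have "1 \<le> S 0 + d \<or> 1 \<le> S 1 + d" by arith
  then obtain j0 where "j0 < n" "1 \<le> S j0 + d"
    using \<open>2 \<le> n\<close> that[of 0] that[of 1] by fastforce
  have "1 * 1 \<le> (S j0 + d) * (b (Suc j0) - b j0)"
    using \<open>1 \<le> S j0 + d\<close> strict[OF \<open>j0 < n\<close>] by (intro mult_mono) auto
  also have "\<dots> \<le> (\<Sum>j<n. (S j + d) * (b (Suc j) - b j))"
    using \<open>j0 < n\<close> nonneg by (intro member_le_sum) auto
  also have "\<dots> = (\<Sum>j<n. S j * (b (Suc j) - b j)) + d * (\<Sum>j<n. b (Suc j) - b j)"
    by (simp add: distrib_right sum.distrib sum_distrib_left)
  also have "(\<Sum>j<n. b (Suc j) - b j) = b n - b 0"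
    by (rule sum_lessThan_telescope)
  finally show ?thesis
    using summation_by_parts[of e b n] by (simp add: S_def)
qed

lemma sorted_list_of_set_nth_bounds:
  assumes "B \<subseteq> {0..n::nat}" "i < card B"
  shows "sorted_list_of_set B ! i \<le> n"
    and "Suc i < card B \<Longrightarrow> sorted_list_of_set B ! i < sorted_list_of_set B ! Suc i"
proof -
  have "finite B" using assms(1) finite_subset by blast
  then have "sorted_list_of_set B ! i \<in> B"
    using assms(2) nth_mem[of i "sorted_list_of_set B"] by simp
  then show "sorted_list_of_set B ! i \<le> n"
    using assms(1) by auto
  show "Suc i < card B \<Longrightarrow> sorted_list_of_set B ! i < sorted_list_of_set B ! Suc i"
    using \<open>finite B\<close> strict_sorted_list_of_set[of B] by (simp add: sorted_wrt_iff_nth_less)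
qed

lemma walk_sums:
  assumes "e \<in> walks k \<delta> s"
  shows "(\<Sum>i<k. e ! i) = s" and "j \<le> k \<Longrightarrow> \<bar>\<Sum>i<j. e ! i\<bar> \<le> int \<delta>"
proof -
  have len: "length e = k" and "sum_list e = s" and pre: "\<bar>sum_list (take j e)\<bar> \<le> int \<delta>"
    using assms by (auto simp: walks_def)
  then show "(\<Sum>i<k. e ! i) = s"
    by (simp add: sum_list_sum_nth atLeast0LessThan)
  show "\<bar>\<Sum>i<j. e ! i\<bar> \<le> int \<delta>" if "j \<le> k"
    using pre that len by (simp add: sum_list_sum_nth atLeast0LessThan min_absorb2)
qed

lemma abs_signed_sum_le:
  assumes "B \<subseteq> {0..n}" "card B = k" "e \<in> walks k \<delta> 0"
  shows "\<bar>signed_sum B e\<bar> \<le> int \<delta> * int n"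
proof (cases k)
  case 0
  with assms(3) show ?thesis by (simp add: walks_def signed_sum_def)
next
  case (Suc l)
  define b where "b i = int (sorted_list_of_set B ! i)" for i
  have fin: "finite B" using assms(1) finite_subset by blast
  have len: "length e = Suc l" using assms(3) Suc by (simp add: walks_def)
  have "\<bar>(\<Sum>i<Suc l. e ! i * b i) - (\<Sum>i<Suc l. e ! i) * b l\<bar> \<le> int \<delta> * (b l - b 0)"
  proof (rule sum_mult_by_parts_bound)
    show "\<bar>\<Sum>i<j. e ! i\<bar> \<le> int \<delta>" if "j \<le> Suc l" for j
      using walk_sums(2)[OF assms(3)] that Suc by simp
    show "b j \<le> b (Suc j)" if "j < l" for j
      using sorted_list_of_set_nth_bounds(2)[OF assms(1), of j] that assms(2) Suc by (simp add: b_def)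
  qed
  moreover have "(\<Sum>i<Suc l. e ! i) = 0"
    using walk_sums(1)[OF assms(3)] unfolding Suc .
  moreover have "signed_sum B e = (\<Sum>i<Suc l. e ! i * b i)"
    using len by (simp add: signed_sum_def b_def)
  ultimately have "\<bar>signed_sum B e\<bar> \<le> int \<delta> * (b l - b 0)"
    by simp
  also have "\<dots> \<le> int \<delta> * int n"
    using sorted_list_of_set_nth_bounds(1)[OF assms(1), of l] assms(2) Suc
    by (intro mult_left_mono) (simp_all add: b_def)
  finally show ?thesis .
qed

lemma signed_sum_bounds_odd:
  assumes "B \<subseteq> {0..n}" "card B = k" "e \<in> walks k \<delta> 1" "0 < \<delta>" "0 < n"
  shows "(1 - int \<delta>) * int n \<le> signed_sum B e \<and> signed_sum B e \<le> (1 + int \<delta>) * int n - 1"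
proof -
  have len: "length e = k" and pm: "set e \<subseteq> {-1, 1}" and "sum_list e = 1"
    using assms(3) by (simp_all add: walks_def)
  then obtain l where Suc: "k = Suc l" by (cases k) auto
  define b where "b i = int (sorted_list_of_set B ! i)" for i
  have T: "signed_sum B e = (\<Sum>i<Suc l. e ! i * b i)"
    using len Suc by (simp add: signed_sum_def b_def)
  have sum: "(\<Sum>i<Suc l. e ! i) = 1"
    using walk_sums(1)[OF assms(3)] unfolding Suc .
  have prefix: "\<bar>\<Sum>i<j. e ! i\<bar> \<le> int \<delta>" if "j \<le> Suc l" for j
    using walk_sums(2)[OF assms(3)] that Suc by simp
  have strict: "b j < b (Suc j)" if "j < l" for j
    using sorted_list_of_set_nth_bounds(2)[OF assms(1), of j] that assms(2) Suc by (simp add: b_def)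
  have range: "0 \<le> b 0" "b l \<le> int n"
    using sorted_list_of_set_nth_bounds(1)[OF assms(1), of l] assms(2) Suc by (simp_all add: b_def)
  have "\<bar>signed_sum B e - b l\<bar> \<le> int \<delta> * (b l - b 0)"
    using sum_mult_by_parts_bound[of l "\<lambda>i. e ! i" "int \<delta>" b] prefix strict T sum
    by (simp add: less_imp_le)
  then have "b l - int \<delta> * (b l - b 0) \<le> signed_sum B e"
    by linarith
  moreover have "(1 - int \<delta>) * b l = b l - int \<delta> * (b l - b 0) - int \<delta> * b 0"
    by (simp add: algebra_simps)
  moreover have "0 \<le> int \<delta> * b 0"
    using range by simp
  ultimately have "(1 - int \<delta>) * b l \<le> signed_sum B e"
    by linarith
  moreover have "(1 - int \<delta>) * int n \<le> (1 - int \<delta>) * b l"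
    using range \<open>0 < \<delta>\<close> by (intro mult_left_mono_neg) simp_all
  moreover have "signed_sum B e \<le> (1 + int \<delta>) * int n - 1"
  proof (cases "l = 0")
    case True
    then have "signed_sum B e = b 0" using T sum by simp
    moreover have "int n \<le> int \<delta> * int n" using assms(4,5) by simp
    moreover have "b 0 \<le> int n" "1 \<le> int n" using range True assms(5) by simp_all
    ultimately have "signed_sum B e \<le> int n + int \<delta> * int n - 1" by linarith
    then show ?thesis by (simp add: algebra_simps)
  next
    case False
    have "even (1 + int (Suc l))"
      using even_sum_list_plus_length[OF pm] \<open>sum_list e = 1\<close> len Suc by simp
    with False have "2 \<le> l" by presburger
    moreover have "e ! 1 \<in> set e"
      using len Suc \<open>2 \<le> l\<close> by (intro nth_mem) simp
    with pm have "e ! 1 \<noteq> 0" by auto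
    ultimately have "signed_sum B e \<le> b l + int \<delta> * (b l - b 0) - 1"
      using sum_mult_by_parts_upper[of l "\<lambda>i. e ! i" "int \<delta>" b] prefix strict T sum by simp
    also have "\<dots> \<le> (1 + int \<delta>) * int n - 1"
    proof -
      have "int \<delta> * (b l - b 0) \<le> int \<delta> * int n"
        using range by (intro mult_left_mono) simp_all
      with range have "b l + int \<delta> * (b l - b 0) - 1 \<le> int n + int \<delta> * int n - 1"
        by linarith
      then show ?thesis by (simp add: algebra_simps)
    qed
    finally show ?thesis .
  qed
  ultimately show ?thesis by linarith
qed

lemma choose_mult_card_walks_le:
  assumes "is_Bk k A" "finite R"
    and "\<And>B e. B \<subseteq> A \<Longrightarrow> card B = k \<Longrightarrow> e \<in> walks k \<delta> s \<Longrightarrow> signed_sum B e \<in> R"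
  shows "(card A choose k) * card (walks k \<delta> s) \<le> card R"
proof -
  let ?S = "{B. B \<subseteq> A \<and> card B = k} \<times> walks k \<delta> s"
  have "inj_on (\<lambda>(B, e). signed_sum B e) ?S"
    by (rule inj_on_subset[OF inj_on_signed_sum[OF assms(1), of s]]) (auto simp: walks_def)
  then have "card ?S \<le> card R"
    using assms(2,3) by (intro card_inj_on_le) auto
  moreover have "finite A" using assms(1) by (simp add: is_Bk_def)
  ultimately show ?thesis
    by (simp add: card_cartesian_product n_subsets)
qed

lemma choose_mult_zeta_le:
  assumes "is_Bk k A" "A \<subseteq> {0..n}" "0 < k" "0 < n" "0 < \<delta>"
  shows "(card A choose k) * zeta k \<delta> \<le> (if even k then 1 else 2) * \<delta> * n"
proof (cases "even k")
  case True
  have "(card A choose k) * card (walks k \<delta> 0) \<le> card {- (int \<delta> * int n) .. int \<delta> * int n}"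
  proof (rule choose_mult_card_walks_le[OF assms(1)])
    fix B e assume "B \<subseteq> A" "card B = k" "e \<in> walks k \<delta> 0"
    with assms(2) have "\<bar>signed_sum B e\<bar> \<le> int \<delta> * int n"
      by (intro abs_signed_sum_le) auto
    then show "signed_sum B e \<in> {- (int \<delta> * int n) .. int \<delta> * int n}"
      by (simp add: abs_le_iff)
  qed simp
  moreover have "2 * ((card A choose k) * zeta k \<delta>) = (card A choose k) * (2 * zeta k \<delta>)"
    by simp
  moreover have "\<dots> \<le> (card A choose k) * card (walks k \<delta> 0)"
    using two_mult_zeta_le_card_walks[OF assms(3) True] by (rule mult_le_mono2)
  ultimately have "2 * ((card A choose k) * zeta k \<delta>) \<le> card {- (int \<delta> * int n) .. int \<delta> * int n}"
    by linarith
  also have "\<dots> = 2 * (\<delta> * n) + 1"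
    by (simp add: nat_add_distrib nat_mult_distrib)
  finally have "2 * ((card A choose k) * zeta k \<delta>) \<le> 2 * (\<delta> * n) + 1" .
  with True show ?thesis by simp
next
  case False
  have "(card A choose k) * card (walks k \<delta> 1) \<le> card {(1 - int \<delta>) * int n .. (1 + int \<delta>) * int n - 1}"
  proof (rule choose_mult_card_walks_le[OF assms(1)])
    fix B e assume "B \<subseteq> A" "card B = k" "e \<in> walks k \<delta> 1"
    with assms(2,4,5) show "signed_sum B e \<in> {(1 - int \<delta>) * int n .. (1 + int \<delta>) * int n - 1}"
      using signed_sum_bounds_odd[of B n k e \<delta>] by auto
  qed simp
  moreover have "(card A choose k) * zeta k \<delta> \<le> (card A choose k) * card (walks k \<delta> 1)"
    using mult_le_mono2[OF zeta_le_card_walks[OF False]] .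
  ultimately have "(card A choose k) * zeta k \<delta> \<le> card {(1 - int \<delta>) * int n .. (1 + int \<delta>) * int n - 1}"
    by linarith
  also have "\<dots> = nat (2 * int \<delta> * int n)"
    by (simp add: algebra_simps)
  finally have "(card A choose k) * zeta k \<delta> \<le> nat (2 * int \<delta> * int n)" .
  with False show ?thesis by (simp add: nat_mult_distrib)
qed

lemma choose_card_plus_le_of_Bk:
  assumes "is_Bk k A" "A \<subseteq> {0..n}"
  shows "(card A + k - 1) choose k \<le> k * n + 1"
proof -
  have "finite A" using assms(1) by (simp add: is_Bk_def)
  have "card (multisets_of_size A k) \<le> card {0..k * n}"
  proof (rule card_inj_on_le)
    show "inj_on sum_mset (multisets_of_size A k)"
      using assms(1) by (auto intro: inj_onI simp: is_Bk_def multisets_of_size_def)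
    show "sum_mset ` multisets_of_size A k \<subseteq> {0..k * n}"
    proof clarify
      fix X assume "X \<in> multisets_of_size A k"
      then have "set_mset X \<subseteq> {0..n}" "size X = k"
        using assms(2) by (auto simp: multisets_of_size_def)
      then have "\<And>i. i \<in># X \<Longrightarrow> i \<le> n" by auto
      then have "sum_mset X \<le> size X * n"
        using sum_mset_mono[of X "\<lambda>x. x" "\<lambda>_. n"] by simp
      with \<open>size X = k\<close> show "sum_mset X \<in> {0..k * n}" by (simp add: mult.commute)
    qed
  qed simp
  then show ?thesis using card_multisets_of_size[OF \<open>finite A\<close>] by simp
qed

lemma pow_mult_zeta_le_of_card_lt:
  assumes "is_Bk k A" "A \<subseteq> {0..n}" "0 < n" "card A < k"
    and "(exp 1 - 1) / exp 1 * real k < real (card A)"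
  shows "(real (card A) - (exp 1 - 1) / exp 1 * real k) ^ k * real (zeta k \<delta>) \<le> fact k * real n"
proof -
  define m where "m = card A"
  define N where "N = m + k - 1"
  define P where "P = (real m - (exp 1 - 1) / exp 1 * real k) ^ k * real (zeta k \<delta>)"
  define X where "X = (real m / exp 1) ^ k * 2 ^ (k - 1)"
  have "0 < k" using assms(4) by simp
  have "(exp 1 - 1) / exp 1 * real m \<le> (exp 1 - 1) / exp 1 * real k"
    using assms(4) by (intro mult_left_mono) (simp_all add: m_def)
  moreover have "real m - (exp 1 - 1) / exp 1 * real m = real m / exp 1"
    by (simp add: field_simps)
  ultimately have gap: "0 \<le> real m - (exp 1 - 1) / exp 1 * real k"
    "real m - (exp 1 - 1) / exp 1 * real k \<le> real m / exp 1"
    using assms(5) by (simp_all add: m_def)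
  have "real (zeta k \<delta>) \<le> real (2 ^ (k - 1))"
    using zeta_le_two_pow[OF \<open>0 < k\<close>] by (rule of_nat_mono)
  with gap have "P \<le> X"
    unfolding P_def X_def by (intro mult_mono power_mono) simp_all
  have X: "X * (real k + 1) \<le> real m ^ k"
  proof -
    have "(2::real) ^ (k - 1) * 2 = 2 ^ k"
      using \<open>0 < k\<close> by (cases k) simp_all
    then have "X * 2 = (real m / exp 1) ^ k * 2 ^ k"
      by (simp add: X_def mult.assoc)
    also have "\<dots> = real m ^ k * (2 / exp 1) ^ k"
      by (simp add: power_divide)
    finally have "X * (real k + 1) * 2 = real m ^ k * ((2 / exp 1) ^ k * (real k + 1))"
      by (simp add: algebra_simps)
    also have "\<dots> \<le> real m ^ k * 2"
      using two_div_exp_one_pow_le[OF \<open>0 < k\<close>] by (intro mult_left_mono) simp_all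
    finally show ?thesis by simp
  qed
  have "P * (real k + 1) \<le> X * (real k + 1)"
    using \<open>P \<le> X\<close> by (rule mult_right_mono) simp
  also note X
  also have "real m ^ k = (\<Prod>i<k. real m)" by simp
  also have "\<dots> \<le> (\<Prod>i<k. real N - real i)"
    by (rule prod_mono) (auto simp: N_def)
  also have "\<dots> = real (N choose k) * fact k"
    by (rule choose_mult_fact_eq_prod[symmetric])
  also have "\<dots> \<le> real ((k + 1) * n) * fact k"
  proof (intro mult_right_mono of_nat_mono)
    have "N choose k \<le> k * n + 1"
      using choose_card_plus_le_of_Bk[OF assms(1,2)] by (simp add: N_def m_def)
    with assms(3) show "N choose k \<le> (k + 1) * n" by simp
  qed simp
  also have "\<dots> = fact k * real n * (real k + 1)"
    by (simp add: algebra_simps)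
  finally show ?thesis
    by (simp add: P_def m_def)
qed

lemma pow_mult_zeta_le_of_le_card:
  assumes "is_Bk k A" "A \<subseteq> {0..n}" "0 < k" "0 < n" "0 < \<delta>" "k \<le> card A"
  shows "(real (card A) - (exp 1 - 1) / exp 1 * real k) ^ k * real (zeta k \<delta>)
           \<le> real \<delta> * (1 + (if even k then 0 else 1)) * fact k * real n"
proof -
  have "(real (card A) - (exp 1 - 1) / exp 1 * real k) ^ k * real (zeta k \<delta>)
          \<le> real (card A choose k) * fact k * real (zeta k \<delta>)"
    using pow_le_falling_prod[of k "card A"] assms(3,6)
    by (intro mult_right_mono) (simp_all add: choose_mult_fact_eq_prod)
  also have "\<dots> = real ((card A choose k) * zeta k \<delta>) * fact k"
    by simp
  also have "\<dots> \<le> real ((if even k then 1 else 2) * \<delta> * n) * fact k"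
    using of_nat_mono[OF choose_mult_zeta_le[OF assms(1-5)]] by (rule mult_right_mono) simp
  also have "\<dots> = real \<delta> * (1 + (if even k then 0 else 1)) * fact k * real n"
    by simp
  finally show ?thesis .
qed

lemma pow_mult_zeta_le:
  assumes "is_Bk k A" "A \<subseteq> {0..n}" "0 < k" "0 < n" "0 < \<delta>"
    and "(exp 1 - 1) / exp 1 * real k < real (card A)"
  shows "(real (card A) - (exp 1 - 1) / exp 1 * real k) ^ k * real (zeta k \<delta>)
           \<le> real \<delta> * (1 + (if even k then 0 else 1)) * fact k * real n"
proof (cases "k \<le> card A")
  case False
  then have "(real (card A) - (exp 1 - 1) / exp 1 * real k) ^ k * real (zeta k \<delta>) \<le> 1 * fact k * real n"
    using pow_mult_zeta_le_of_card_lt[OF assms(1,2,4) _ assms(6)] by simp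
  also have "\<dots> \<le> real \<delta> * (1 + (if even k then 0 else 1)) * fact k * real n"
    using assms(5) by (intro mult_right_mono) simp_all
  finally show ?thesis .
qed (use pow_mult_zeta_le_of_le_card[OF assms(1-5)] in simp)

lemma Phi_attained: "\<exists>A. A \<subseteq> {0..n} \<and> is_Bk k A \<and> Phi k n = card A"
proof -
  let ?S = "{card A | A. A \<subseteq> {0..n} \<and> is_Bk k A}"
  have "finite ?S" by (rule finite_subset[of _ "card ` Pow {0..n}"]) auto
  moreover have "is_Bk k {}" by (auto simp: is_Bk_def)
  then have "card {} \<in> ?S" by (intro CollectI exI[of _ "{}"]) simp
  ultimately have "Max ?S \<in> ?S" by (intro Max_in) auto
  then show ?thesis by (auto simp: Phi_def)
qed

theorem theorem1:
  fixes k n \<delta> :: nat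
  assumes "k > 0" and "n > 0" and "\<delta> > 0"
  shows "real (Phi k n) \<le>
    (real \<delta> * (1 + (if even k then 0 else 1)) * fact k / real (zeta k \<delta>)) powr (1 / real k)
      * real n powr (1 / real k) + (exp 1 - 1) / exp 1 * real k"
proof -
  obtain A where A: "A \<subseteq> {0..n}" "is_Bk k A" "Phi k n = card A"
    using Phi_attained by blast
  define c where "c = (exp 1 - 1) / exp 1 * real k"
  define D where "D = real \<delta> * (1 + (if even k then 0 else 1)) * fact k / real (zeta k \<delta>)"
  have "0 < real (zeta k \<delta>)" using zeta_pos assms(1,3) by simp
  then have "0 \<le> D" by (simp add: D_def)
  have "real (card A) \<le> (D * real n) powr (1 / real k) + c"
  proof (cases "c < real (card A)")
    case True
    have D: "D * real n * real (zeta k \<delta>) = real \<delta> * (1 + (if even k then 0 else 1)) * fact k * real n"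
      using \<open>0 < real (zeta k \<delta>)\<close> by (simp add: D_def)
    have "(real (card A) - c) ^ k * real (zeta k \<delta>) \<le> D * real n * real (zeta k \<delta>)"
      unfolding c_def D by (rule pow_mult_zeta_le[OF A(2,1) assms True[unfolded c_def]])
    then have "(real (card A) - c) ^ k \<le> D * real n"
      using \<open>0 < real (zeta k \<delta>)\<close> by simp
    then have "real (card A) - c \<le> (D * real n) powr (1 / real k)"
      using True assms(1) by (intro le_powr_inverse_if_pow_le) simp_all
    then show ?thesis by simp
  qed (use powr_ge_zero[of "D * real n" "1 / real k"] in linarith)
  also have "(D * real n) powr (1 / real k) = D powr (1 / real k) * real n powr (1 / real k)"
    using \<open>0 \<le> D\<close> by (simp add: powr_mult)
  finally show ?thesis
    unfolding A(3) c_def D_def .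
qed

end
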